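(* Let $\alpha,\beta,\gamma\in\mathbb{Z}_2^n$ and $a\in\mathbb{Z}_2$. Then $$\mathrm{padp}_{a,0}(\alpha,\beta,\gamma)+\mathrm{padp}_{a\oplus1,1}(\alpha,\beta,\gamma)\le\mathrm{padp}_{0,0}(\alpha,\alpha,0)+\mathrm{padp}_{1,1}(\alpha,\alpha,0).$$
   Context: Indices $0,\dots,7$ are identified with $\mathbb{Z}_2^3$ via $(p_0,p_1,p_2)\leftrightarrow4p_0+2p_1+p_2$; $e_0,\dots,e_7$ are the standard basis row vectors of $\mathbb{Q}^8$. $A_0$ is $\frac14$ times the $8\times8$ matrix with rows $(4,0,0,1,0,1,1,0)$, $(0,0,0,1,0,1,0,0)$, $(0,0,0,1,0,0,1,0)$, $(0,0,0,1,0,0,0,0)$, $(0,0,0,0,0,1,1,0)$, $(0,0,0,0,0,1,0,0)$, $(0,0,0,0,0,0,1,0)$, $(0,\dots,0)$, and $(A_k)_{i,j}=(A_0)_{i\oplus k,j\oplus k}$. For $\alpha,\beta,\gamma\in\mathbb{Z}_2^n$ let $\omega_i=4\alpha_i+2\beta_i+\gamma_i$. With $L_{0,0}=(1,1,0,0,0,0,0,0)$, $L_{0,1}=(0,0,1,1,0,0,0,0)$, $L_{1,0}=(0,0,0,0,1,1,0,0)$, $L_{1,1}=(0,0,0,0,0,0,1,1)$, $\mathrm{padp}_{a,b}(\alpha,\beta,\gamma)=L_{a,b}A_{\omega_0}\cdots A_{\omega_{n-1}}e_0^T$. *)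

theory Defs
  imports Complex_Main
begin

text \<open>Elements of Z_2 are booleans (True = 1); elements of Z_2^n are boolean lists of length n.
  Indices 0..7 are natural numbers; (p0,p1,p2) corresponds to 4 p0 + 2 p1 + p2,
  and componentwise XOR on Z_2^3 is bitwise xor on the index.\<close>

definition b2n :: "bool \<Rightarrow> nat" where "b2n b = (if b then 1 else 0)"

definition A0rows :: "nat list list" where
  "A0rows = [[4,0,0,1,0,1,1,0],
             [0,0,0,1,0,1,0,0],
             [0,0,0,1,0,0,1,0],
             [0,0,0,1,0,0,0,0],
             [0,0,0,0,0,1,1,0],
             [0,0,0,0,0,1,0,0],
             [0,0,0,0,0,0,1,0],
             [0,0,0,0,0,0,0,0]]"

definition A0 :: "nat \<Rightarrow> nat \<Rightarrow> rat" where
  "A0 i j = rat_of_nat (A0rows ! i ! j) / 4"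

definition Amat :: "nat \<Rightarrow> nat \<Rightarrow> nat \<Rightarrow> rat" where
  "Amat k i j = A0 (Bit_Operations.xor i k) (Bit_Operations.xor j k)"

definition mulv :: "(nat \<Rightarrow> nat \<Rightarrow> rat) \<Rightarrow> (nat \<Rightarrow> rat) \<Rightarrow> nat \<Rightarrow> rat" where
  "mulv M v = (\<lambda>i. \<Sum>j<8. M i j * v j)"

definition e0 :: "nat \<Rightarrow> rat" where "e0 j = (if j = 0 then 1 else 0)"

definition omegas :: "bool list \<Rightarrow> bool list \<Rightarrow> bool list \<Rightarrow> nat list" where
  "omegas \<alpha> \<beta> \<gamma> = map (\<lambda>(a,b,c). 4 * b2n a + 2 * b2n b + b2n c) (zip \<alpha> (zip \<beta> \<gamma>))"

definition prodvec :: "nat list \<Rightarrow> nat \<Rightarrow> rat" where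
  "prodvec ws = foldr (\<lambda>w v. mulv (Amat w) v) ws e0"

definition Lvec :: "bool \<Rightarrow> bool \<Rightarrow> nat \<Rightarrow> rat" where
  "Lvec a b j = (if j div 2 = 2 * b2n a + b2n b \<and> j < 8 then 1 else 0)"

definition padp :: "bool \<Rightarrow> bool \<Rightarrow> bool list \<Rightarrow> bool list \<Rightarrow> bool list \<Rightarrow> rat" where
  "padp a b \<alpha> \<beta> \<gamma> = (\<Sum>j<8. Lvec a b j * prodvec (omegas \<alpha> \<beta> \<gamma>) j)"

end

theory Submission
  imports Defs
begin

text \<open>Let u be the vector A_{\<omega>_0} ... A_{\<omega>_{n-1}} e_0 of the word (\<alpha>, \<beta>, \<gamma>) and r that of
  (\<alpha>, \<alpha>, 0), whose letters are 0 or 6 according to \<alpha>_i. The left-hand side is a sum of four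
  entries of u, the right-hand side one of four entries of r. A short list of sign conditions and
  linear inequalities between u and r, which contains the claim, holds for u = r = e_0 and is
  preserved when A_\<omega> is applied to u and A_0 or A_6 (as \<omega> < 4 or not) to r; each of the eight
  letters is a direct check on the sparse matrix A_0.\<close>

definition omega_index :: "bool \<Rightarrow> bool \<Rightarrow> bool \<Rightarrow> nat" where
  "omega_index x y z = 4 * b2n x + 2 * b2n y + b2n z"

lemma b2n_simps [simp]: "b2n True = 1" "b2n False = 0"
  by (simp_all add: b2n_def)

lemma omega_index_less_8: "omega_index x y z < 8"
  by (simp add: omega_index_def b2n_def)

lemma omega_index_diagonal:
  "omega_index x x False = (if omega_index x y z < 4 then 0 else 6)"
  by (simp add: omega_index_def b2n_def)

lemma omegas_Cons:
  "omegas (x # xs) (y # ys) (z # zs) = omega_index x y z # omegas xs ys zs"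
  by (simp add: omegas_def omega_index_def)

lemma prodvec_Cons: "prodvec (w # ws) = mulv (Amat w) (prodvec ws)"
  by (simp add: prodvec_def)

lemma less_8_cases: "(w::nat) < 8 \<Longrightarrow> w \<in> {0, 1, 2, 3, 4, 5, 6, 7}"
  by auto

lemma all_less_8:
  "(\<forall>j<8. P j) \<longleftrightarrow> P 0 \<and> P 1 \<and> P 2 \<and> P 3 \<and> P 4 \<and> P 5 \<and> P 6 \<and> P (7::nat)"
  using less_8_cases by auto

lemma sum_lessThan_8:
  fixes f :: "nat \<Rightarrow> 'a::comm_monoid_add"
  shows "(\<Sum>j<8. f j) = f 0 + f 1 + f 2 + f 3 + f 4 + f 5 + f 6 + f 7"
  by (simp add: eval_nat_numeral add.assoc)

lemma Lvec_inner:
  "(\<Sum>j<8. Lvec a b j * v j) =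
     (case (a, b) of
        (False, False) \<Rightarrow> v 0 + v 1 | (False, True) \<Rightarrow> v 2 + v 3
      | (True, False) \<Rightarrow> v 4 + v 5 | (True, True) \<Rightarrow> v 6 + v 7)"
  by (cases a; cases b) (simp_all add: sum_lessThan_8 Lvec_def)

text \<open>The last two inequalities are the claim, as r vanishes at odd indices; the four bounds on
  pairs of entries of u before them are what makes the list invariant.\<close>

definition pair_dominated :: "(nat \<Rightarrow> rat) \<Rightarrow> (nat \<Rightarrow> rat) \<Rightarrow> bool" where
  "pair_dominated u r \<longleftrightarrow>
     (\<forall>j<8. 0 \<le> u j) \<and> 0 \<le> r 0 \<and> 0 \<le> r 2 \<and> 0 \<le> r 4 \<and> 0 \<le> r 6 \<and>
     r 1 = 0 \<and> r 3 = 0 \<and> r 5 = 0 \<and> r 7 = 0 \<and>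
     u 0 + u 3 \<le> r 0 \<and> u 1 + u 2 \<le> r 0 \<and> u 4 + u 7 \<le> r 6 \<and> u 5 + u 6 \<le> r 6 \<and>
     u 0 + u 1 + u 6 + u 7 \<le> r 0 + r 6 \<and> u 2 + u 3 + u 4 + u 5 \<le> r 0 + r 6"

lemma pair_dominated_e0: "pair_dominated e0 e0"
  by (simp add: pair_dominated_def e0_def)

lemma pair_dominated_step:
  assumes "pair_dominated u r" and "w < 8"
  shows "pair_dominated (mulv (Amat w) u) (mulv (Amat (if w < 4 then 0 else 6)) r)"
  using less_8_cases[OF assms(2)] assms(1)
  unfolding pair_dominated_def all_less_8 mulv_def sum_lessThan_8
  by (elim insertE; simp add: Amat_def A0_def A0rows_def)

lemma pair_dominated_prodvec:
  assumes "length \<alpha> = length \<beta>" and "length \<beta> = length \<gamma>"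
  shows "pair_dominated (prodvec (omegas \<alpha> \<beta> \<gamma>))
           (prodvec (omegas \<alpha> \<alpha> (replicate (length \<alpha>) False)))"
  using assms
proof (induction \<alpha> \<beta> \<gamma> rule: list_induct3)
  case Nil
  show ?case by (simp add: omegas_def prodvec_def pair_dominated_e0)
next
  case (Cons x xs y ys z zs)
  then show ?case
    using pair_dominated_step[OF Cons.IH omega_index_less_8]
    by (simp add: omegas_Cons prodvec_Cons omega_index_diagonal[of x y z])
qed

theorem lemma3:
  fixes \<alpha> \<beta> \<gamma> :: "bool list" and a :: bool and n :: nat
  assumes "length \<alpha> = n" and "length \<beta> = n" and "length \<gamma> = n"
  shows "padp a False \<alpha> \<beta> \<gamma> + padp (\<not> a) True \<alpha> \<beta> \<gamma>
           \<le> padp False False \<alpha> \<alpha> (replicate n False) + padp True True \<alpha> \<alpha> (replicate n False)"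
proof -
  define u where "u = prodvec (omegas \<alpha> \<beta> \<gamma>)"
  define r where "r = prodvec (omegas \<alpha> \<alpha> (replicate n False))"
  have "pair_dominated u r"
    unfolding u_def r_def using pair_dominated_prodvec assms by metis
  then show ?thesis
    unfolding padp_def Lvec_inner u_def[symmetric] r_def[symmetric]
    by (cases a) (simp_all add: pair_dominated_def)
qed

end
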